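(* Let $d\ge2$, let $\Gamma\subset\mathbb R^d$ be a closed (compact, boundaryless) hypersurface of class $C^3$ with interior $\Omega_-$ and exterior $\Omega_+$, and let $n$ be the unit normal on $\Gamma$ pointing from $\Omega_-$ to $\Omega_+$. Let $V\in C^2_{\rm c}(\mathbb R^d,\mathbb R^d)$ and for $t\in\mathbb R$, $X\in\mathbb R^d$ let $T_t(X)=x(t,X)$, where $x(\cdot,X)$ solves $\dot x=V(x)$, $x(0,X)=X$. If $V\cdot n=0$ on $\Gamma$, then there exist $t_0>0$ and $C>0$, depending on $\Gamma$ and $V$, such that $$\mathrm{dist}(T_t(X),\Gamma)\le Ct^2\qquad\text{for all }X\in\Gamma\text{ and all }t\in\mathbb R\text{ with }|t|\le t_0,$$ and $$\big|\{x\in\mathbb R^d:\chi_{T_t(\Omega_{\rm s})}(x)\ne\chi_{\Omega_{\rm s}}(x)\}\big|\le Ct^2\qquad\text{if }|t|\le t_0,\ {\rm s}=-\text{ or }+,$$ where $|\cdot|$ denotes Lebesgue measure and $\chi_A$ is the characteristic function of $A$. *)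

theory Defs
  imports "HOL-Analysis.Analysis"
begin

fun Ck_on :: "nat \<Rightarrow> 'a::euclidean_space set \<Rightarrow> ('a \<Rightarrow> 'b::real_normed_vector) \<Rightarrow> bool" where
  "Ck_on 0 S f = continuous_on S f"
| "Ck_on (Suc k) S f =
     (f differentiable_on S \<and>
      (\<forall>v\<in>Basis. Ck_on k S (\<lambda>x. frechet_derivative f (at x) v)))"

definition local_C3_defining_fun :: "'a::euclidean_space set \<Rightarrow> 'a \<Rightarrow> 'a set \<Rightarrow> ('a \<Rightarrow> real) \<Rightarrow> bool" where
  "local_C3_defining_fun \<Gamma> p U \<phi> \<longleftrightarrow>
     open U \<and> p \<in> U \<and> Ck_on 3 U \<phi> \<and>
     (\<forall>x\<in>U. x \<in> \<Gamma> \<longleftrightarrow> \<phi> x = 0) \<and>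
     (\<forall>x\<in>U \<inter> \<Gamma>. frechet_derivative \<phi> (at x) \<noteq> (\<lambda>_. 0))"

definition C3_closed_hypersurface :: "'a::euclidean_space set \<Rightarrow> bool" where
  "C3_closed_hypersurface \<Gamma> \<longleftrightarrow>
     compact \<Gamma> \<and> \<Gamma> \<noteq> {} \<and> (\<forall>p\<in>\<Gamma>. \<exists>U \<phi>. local_C3_defining_fun \<Gamma> p U \<phi>)"

text \<open>n is a unit normal field on Gamma: unit length and orthogonal to the tangent
  space (the kernel of the differential of any local defining function).\<close>
definition unit_normal_field :: "'a::euclidean_space set \<Rightarrow> ('a \<Rightarrow> 'a) \<Rightarrow> bool" where
  "unit_normal_field \<Gamma> n \<longleftrightarrow>
     (\<forall>p\<in>\<Gamma>. norm (n p) = 1 \<and>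
        (\<forall>U \<phi>. local_C3_defining_fun \<Gamma> p U \<phi> \<longrightarrow>
           (\<forall>v. frechet_derivative \<phi> (at p) v = 0 \<longrightarrow> n p \<bullet> v = 0)))"

end

theory Submission
  imports Defs
begin

text \<open>Near a point of \<Gamma> pick a local defining function \<phi> together with a unit vector e
  along which \<phi> increases at rate at least c > 0. Because V is tangent to \<Gamma>, the derivative
  of \<phi> along V vanishes on \<Gamma>; it is Lipschitz, so along a flow line that starts on \<Gamma> the
  value of \<phi> grows only quadratically in time. Transversality turns \<open>\<bar>\<phi>\<bar> \<le> \<delta>\<close> into
  distance at most \<delta>/c from \<Gamma>, and bounds the measure of the slab \<open>\<bar>\<phi>\<bar> \<le> \<delta>\<close> by a
  multiple of \<delta>, because its translates by multiples of 3\<delta>/c along e are pairwise disjoint.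
  Compactness of \<Gamma> gives finitely many such charts with uniform constants. Finally, as V is
  globally Lipschitz the flow is a group, and a point of the symmetric difference of
  \<open>T t ` \<Omega>\<close> and \<Omega> has an orbit that crosses \<open>frontier \<Omega> \<subseteq> \<Gamma>\<close> within time \<open>\<bar>t\<bar>\<close>,
  so it lies in one of finitely many slabs of width quadratic in t.\<close>

section \<open>Continuously differentiable functions and Lipschitz bounds\<close>

lemma Ck_on_imp_continuous_on: "Ck_on k S f \<Longrightarrow> continuous_on S f"
  by (cases k) (auto intro: differentiable_imp_continuous_on)

lemma Ck_on_subset: "Ck_on k S f \<Longrightarrow> T \<subseteq> S \<Longrightarrow> Ck_on k T f"
  by (induction k arbitrary: f) (auto intro: continuous_on_subset differentiable_on_subset)

lemma Ck_on_Suc_has_derivative: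
  assumes "Ck_on (Suc k) S f" "open S" "x \<in> S"
  shows "(f has_derivative frechet_derivative f (at x)) (at x)"
  using assms by (simp add: differentiable_on_eq_differentiable_at frechet_derivative_works)

lemma Ck_on_Suc_continuous_on_partial:
  "Ck_on (Suc k) S f \<Longrightarrow> b \<in> Basis \<Longrightarrow> continuous_on S (\<lambda>x. frechet_derivative f (at x) b)"
  by (auto intro: Ck_on_imp_continuous_on)

lemma Ck_on_Suc_onorm_bounded:
  fixes f :: "'a::euclidean_space \<Rightarrow> 'b::real_normed_vector"
  assumes f: "Ck_on (Suc k) S f" and S: "open S" and K: "compact K" "K \<subseteq> S"
  obtains B where "B > 0" "\<And>x. x \<in> K \<Longrightarrow> onorm (frechet_derivative f (at x)) \<le> B"
proof -
  define h where "h x = (\<Sum>b\<in>Basis. norm (frechet_derivative f (at x) b))" for x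
  have "continuous_on K h"
    unfolding h_def using Ck_on_Suc_continuous_on_partial[OF f] K(2)
    by (intro continuous_intros) (auto intro: continuous_on_subset)
  then obtain B where B: "B > 0" "\<And>x. x \<in> K \<Longrightarrow> norm (h x) \<le> B"
    using K(1) compact_continuous_image compact_imp_bounded bounded_pos by (metis imageI)
  have "onorm (frechet_derivative f (at x)) \<le> B" if "x \<in> K" for x
  proof -
    have "onorm (frechet_derivative f (at x)) \<le> h x"
      unfolding h_def using Ck_on_Suc_has_derivative[OF f S] that K(2)
      by (blast intro: onorm_componentwise has_derivative_bounded_linear)
    also have "\<dots> \<le> B" using B(2)[OF that] by simp
    finally show ?thesis .
  qed
  with B(1) show ?thesis by (rule that)
qed

lemma Ck_on_Suc_lipschitz_on_compact_convex:
  fixes f :: "'a::euclidean_space \<Rightarrow> 'b::real_normed_vector"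
  assumes f: "Ck_on (Suc k) S f" and S: "open S" and K: "compact K" "convex K" "K \<subseteq> S"
  obtains L where "L-lipschitz_on K f"
proof -
  obtain B where B: "B > 0" "\<And>x. x \<in> K \<Longrightarrow> onorm (frechet_derivative f (at x)) \<le> B"
    using Ck_on_Suc_onorm_bounded[OF f S K(1,3)] by blast
  have "B-lipschitz_on K f"
    using Ck_on_Suc_has_derivative[OF f S] K(3) B
    by (intro bounded_derivative_imp_lipschitz[OF _ K(2)]) (auto intro: has_derivative_at_withinI)
  then show ?thesis by (rule that)
qed

lemma compact_support_bounded:
  fixes V :: "'a::euclidean_space \<Rightarrow> 'b::real_normed_vector"
  assumes "continuous_on UNIV V" "bounded {x. V x \<noteq> 0}"
  obtains M where "M > 0" "\<And>x. norm (V x) \<le> M"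
proof -
  obtain x0 R where R: "{x. V x \<noteq> 0} \<subseteq> cball x0 R"
    using assms(2) bounded_subset_cball by blast
  have "bounded (V ` cball x0 R)"
    using assms(1)
    by (intro compact_imp_bounded compact_continuous_image) (auto intro: continuous_on_subset)
  then have "bounded (insert 0 (V ` cball x0 R))" by simp
  then obtain M where "M > 0" "\<And>y. y \<in> insert 0 (V ` cball x0 R) \<Longrightarrow> norm y \<le> M"
    unfolding bounded_pos by blast
  moreover have "V x \<in> insert 0 (V ` cball x0 R)" for x using R by blast
  ultimately show ?thesis using that by blast
qed

lemma Ck_on_Suc_compact_support_lipschitz:
  fixes V :: "'a::euclidean_space \<Rightarrow> 'b::real_normed_vector"
  assumes V: "Ck_on (Suc k) UNIV V" and supp: "bounded {x. V x \<noteq> 0}"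
  obtains L where "L-lipschitz_on UNIV V"
proof -
  obtain x0 R where R: "{x. V x \<noteq> 0} \<subseteq> cball x0 R"
    using supp bounded_subset_cball by blast
  obtain B where B: "B > 0" "\<And>x. x \<in> cball x0 R \<Longrightarrow> onorm (frechet_derivative V (at x)) \<le> B"
    using Ck_on_Suc_onorm_bounded[OF V open_UNIV compact_cball subset_UNIV] by blast
  have "onorm (frechet_derivative V (at x)) \<le> B" for x
  proof (cases "x \<in> cball x0 R")
    case False
    have "((\<lambda>_. 0) has_derivative (\<lambda>_. 0)) (at x)" by simp
    then have "(V has_derivative (\<lambda>_. 0)) (at x)"
      by (rule has_derivative_transform_within_open[where s = "- cball x0 R"]) (use False R in auto)
    then have "frechet_derivative V (at x) = (\<lambda>_. 0)" by (simp add: frechet_derivative_at[symmetric])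
    then show ?thesis using B(1) by (simp add: onorm_zero)
  qed (rule B(2))
  then have "B-lipschitz_on UNIV V"
    using Ck_on_Suc_has_derivative[OF V open_UNIV] B(1)
    by (intro bounded_derivative_imp_lipschitz) (auto intro: has_derivative_at_withinI)
  then show ?thesis by (rule that)
qed

lemma lipschitz_on_sum:
  fixes f :: "'i \<Rightarrow> 'a::metric_space \<Rightarrow> 'b::real_normed_vector"
  assumes "\<And>i. i \<in> I \<Longrightarrow> (L i)-lipschitz_on X (f i)"
  shows "(\<Sum>i\<in>I. L i)-lipschitz_on X (\<lambda>x. \<Sum>i\<in>I. f i x)"
  using assms
proof (induction I rule: infinite_finite_induct)
  case (insert i I)
  then show ?case by (simp add: lipschitz_on_add)
qed (simp_all add: lipschitz_on_constant)

lemma lipschitz_on_mult_compact: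
  fixes f g :: "'a::metric_space \<Rightarrow> real"
  assumes K: "compact K" and f: "F-lipschitz_on K f" and g: "G-lipschitz_on K g"
  obtains L where "L-lipschitz_on K (\<lambda>x. f x * g x)"
proof -
  obtain A where A: "A > 0" "\<And>x. x \<in> K \<Longrightarrow> \<bar>f x\<bar> \<le> A"
    using compact_imp_bounded[OF compact_continuous_image[OF lipschitz_on_continuous_on[OF f] K]]
    by (auto simp: bounded_pos)
  obtain B where B: "B > 0" "\<And>x. x \<in> K \<Longrightarrow> \<bar>g x\<bar> \<le> B"
    using compact_imp_bounded[OF compact_continuous_image[OF lipschitz_on_continuous_on[OF g] K]]
    by (auto simp: bounded_pos)
  have "(A * G + F * B)-lipschitz_on K (\<lambda>x. f x * g x)"
  proof (rule lipschitz_onI)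
    fix x y assume xy: "x \<in> K" "y \<in> K"
    have "f x * g x - f y * g y = f x * (g x - g y) + (f x - f y) * g y"
      by (simp add: algebra_simps)
    then have "\<bar>f x * g x - f y * g y\<bar> \<le> \<bar>f x\<bar> * \<bar>g x - g y\<bar> + \<bar>f x - f y\<bar> * \<bar>g y\<bar>"
      by (metis abs_mult abs_triangle_ineq)
    also have "\<dots> \<le> A * (G * dist x y) + (F * dist x y) * B"
      using xy A B lipschitz_onD[OF f xy] lipschitz_onD[OF g xy]
      by (intro add_mono mult_mono) (auto simp: dist_real_def)
    finally show "dist (f x * g x) (f y * g y) \<le> (A * G + F * B) * dist x y"
      by (simp add: dist_real_def algebra_simps)
  qed (use A B lipschitz_on_nonneg[OF f] lipschitz_on_nonneg[OF g] in simp)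
  then show ?thesis by (rule that)
qed

lemma linear_real_expansion:
  fixes D :: "'a::euclidean_space \<Rightarrow> real"
  assumes "linear D"
  shows "D v = (\<Sum>b\<in>Basis. (v \<bullet> b) * D b)"
proof -
  have "D v = D (\<Sum>b\<in>Basis. (v \<bullet> b) *\<^sub>R b)" by (simp add: euclidean_representation)
  also have "\<dots> = (\<Sum>b\<in>Basis. (v \<bullet> b) * D b)"
    using assms by (simp add: linear_sum linear_scale)
  finally show ?thesis .
qed

lemma lipschitz_on_inner_Basis:
  fixes V :: "'a::metric_space \<Rightarrow> 'b::euclidean_space"
  assumes "L-lipschitz_on K V" "b \<in> Basis"
  shows "L-lipschitz_on K (\<lambda>x. V x \<bullet> b)"
proof (rule lipschitz_onI)
  fix x y assume "x \<in> K" "y \<in> K"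
  have "\<bar>(V x - V y) \<bullet> b\<bar> \<le> norm (V x - V y)" by (rule Basis_le_norm[OF assms(2)])
  also have "\<dots> \<le> L * dist x y"
    using lipschitz_onD[OF assms(1) \<open>x \<in> K\<close> \<open>y \<in> K\<close>] by (simp add: dist_norm)
  finally show "dist (V x \<bullet> b) (V y \<bullet> b) \<le> L * dist x y"
    by (simp add: dist_real_def inner_diff_left)
qed (rule lipschitz_on_nonneg[OF assms(1)])

lemma lipschitz_on_frechet_derivative_apply:
  fixes \<phi> :: "'a::euclidean_space \<Rightarrow> real" and V :: "'a \<Rightarrow> 'a"
  assumes \<phi>: "Ck_on (Suc (Suc j)) U \<phi>" and V: "Ck_on (Suc k) U V" and U: "open U"
    and K: "compact K" "convex K" "K \<subseteq> U"
  obtains L where "L-lipschitz_on K (\<lambda>x. frechet_derivative \<phi> (at x) (V x))"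
proof -
  obtain LV where LV: "LV-lipschitz_on K V"
    using Ck_on_Suc_lipschitz_on_compact_convex[OF V U K] .
  have "\<forall>b\<in>Basis. \<exists>L. L-lipschitz_on K (\<lambda>x. (V x \<bullet> b) * frechet_derivative \<phi> (at x) b)"
  proof
    fix b :: 'a assume b: "b \<in> Basis"
    have "LV-lipschitz_on K (\<lambda>x. V x \<bullet> b)" by (rule lipschitz_on_inner_Basis[OF LV b])
    moreover have "Ck_on (Suc j) U (\<lambda>x. frechet_derivative \<phi> (at x) b)"
      using \<phi> b by simp
    then obtain LD where "LD-lipschitz_on K (\<lambda>x. frechet_derivative \<phi> (at x) b)"
      by (rule Ck_on_Suc_lipschitz_on_compact_convex[OF _ U K])
    ultimately show "\<exists>L. L-lipschitz_on K (\<lambda>x. (V x \<bullet> b) * frechet_derivative \<phi> (at x) b)"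
      by (blast intro: lipschitz_on_mult_compact[OF K(1)])
  qed
  from bchoice[OF this] obtain Lb where Lb: "\<forall>b\<in>Basis.
      (Lb b)-lipschitz_on K (\<lambda>x. (V x \<bullet> b) * frechet_derivative \<phi> (at x) b)"
    by blast
  have expand: "frechet_derivative \<phi> (at x) (V x) =
      (\<Sum>b\<in>Basis. (V x \<bullet> b) * frechet_derivative \<phi> (at x) b)" if "x \<in> K" for x
  proof (rule linear_real_expansion)
    show "linear (frechet_derivative \<phi> (at x))"
      using that K(3) Ck_on_Suc_has_derivative[OF \<phi> U] has_derivative_linear by blast
  qed
  have "(\<Sum>b\<in>Basis. Lb b)-lipschitz_on K (\<lambda>x. frechet_derivative \<phi> (at x) (V x))"
    using lipschitz_on_sum[of Basis Lb K, OF Lb[rule_format]] expand by (rule lipschitz_on_transform)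
  then show ?thesis by (rule that)
qed

section \<open>Autonomous ODEs with a Lipschitz field\<close>

lemma norm_diff_le_of_vector_derivative_bound:
  fixes u :: "real \<Rightarrow> 'a::real_normed_vector"
  assumes "\<And>t. (u has_vector_derivative u' t) (at t)" "\<And>t. norm (u' t) \<le> M"
  shows "norm (u t - u s) \<le> M * \<bar>t - s\<bar>"
proof -
  have "norm (u t - u s) \<le> M * norm (t - s)"
  proof (rule differentiable_bound[of "closed_segment s t" u "\<lambda>x h. h *\<^sub>R u' x"])
    fix x
    show "(u has_derivative (\<lambda>h. h *\<^sub>R u' x)) (at x within closed_segment s t)"
      using assms(1)[of x] by (simp add: has_vector_derivative_def has_derivative_at_withinI)
    show "onorm (\<lambda>h. h *\<^sub>R u' x) \<le> M"
      using assms(2)[of x] by (simp add: onorm_scaleR_left[OF bounded_linear_ident] onorm_id)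
  qed auto
  then show ?thesis by simp
qed

lemma lipschitz_ode_unique_nonneg:
  fixes u w :: "real \<Rightarrow> 'a::real_inner"
  assumes F: "L-lipschitz_on UNIV F"
    and u: "\<And>s. (u has_vector_derivative F (u s)) (at s)"
    and w: "\<And>s. (w has_vector_derivative F (w s)) (at s)"
    and "u 0 = w 0" "0 \<le> t"
  shows "u t = w t"
proof -
  define k where "k s = exp (- 2 * L * s) * ((u s - w s) \<bullet> (u s - w s))" for s
  have "k t \<le> k 0"
  proof (rule DERIV_nonpos_imp_nonincreasing[OF \<open>0 \<le> t\<close>])
    fix s
    let ?d = "u s - w s" and ?D = "F (u s) - F (w s)"
    have d: "((\<lambda>s. u s - w s) has_derivative (\<lambda>h. h *\<^sub>R ?D)) (at s)"
      using u[of s] w[of s] unfolding has_vector_derivative_def[symmetric]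
      by (intro derivative_intros)
    have q: "((\<lambda>s. (u s - w s) \<bullet> (u s - w s)) has_real_derivative 2 * (?d \<bullet> ?D)) (at s)"
      unfolding has_field_derivative_def
      by (rule has_derivative_eq_rhs[OF has_derivative_inner[OF d d]])
         (auto simp: fun_eq_iff algebra_simps inner_commute)
    have e: "((\<lambda>s. exp (- 2 * L * s)) has_real_derivative exp (- 2 * L * s) * (- 2 * L)) (at s)"
      by (auto intro!: derivative_eq_intros)
    have "?d \<bullet> ?D \<le> norm ?d * norm ?D" by (rule norm_cauchy_schwarz)
    also have "\<dots> \<le> norm ?d * (L * norm ?d)"
      using lipschitz_on_normD[OF F] by (simp add: mult_left_mono)
    finally have "?d \<bullet> ?D - L * (?d \<bullet> ?d) \<le> 0"
      by (simp add: dot_square_norm power2_eq_square algebra_simps)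
    then have "2 * exp (- 2 * L * s) * (?d \<bullet> ?D - L * (?d \<bullet> ?d)) \<le> 0"
      by (simp add: mult_nonneg_nonpos)
    moreover from DERIV_mult[OF e q]
    have "(k has_real_derivative 2 * exp (- 2 * L * s) * (?d \<bullet> ?D - L * (?d \<bullet> ?d))) (at s)"
      unfolding k_def by (rule DERIV_cong) (simp add: algebra_simps)
    ultimately show "\<exists>y. (k has_real_derivative y) (at s) \<and> y \<le> 0" by blast
  qed
  then have "(u t - w t) \<bullet> (u t - w t) \<le> 0" using \<open>u 0 = w 0\<close> by (auto simp: k_def mult_le_0_iff)
  then show ?thesis by (metis inner_gt_zero_iff linorder_not_le right_minus_eq)
qed

lemma lipschitz_ode_unique:
  fixes u w :: "real \<Rightarrow> 'a::real_inner"
  assumes F: "L-lipschitz_on UNIV F"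
    and u: "\<And>s. (u has_vector_derivative F (u s)) (at s)"
    and w: "\<And>s. (w has_vector_derivative F (w s)) (at s)"
    and "u 0 = w 0"
  shows "u t = w t"
proof (cases "0 \<le> t")
  case True
  then show ?thesis by (rule lipschitz_ode_unique_nonneg[OF F u w \<open>u 0 = w 0\<close>])
next
  case False
  have reverse: "((v \<circ> uminus) has_vector_derivative - F ((v \<circ> uminus) s)) (at s)"
    if "\<And>s. (v has_vector_derivative F (v s)) (at s)" for v :: "real \<Rightarrow> 'a" and s
  proof -
    have "(uminus has_vector_derivative - 1) (at s)" by (auto intro!: derivative_eq_intros)
    from vector_diff_chain_at[OF this that[of "- s"]] show ?thesis by simp
  qed
  have "(u \<circ> uminus) (- t) = (w \<circ> uminus) (- t)"
    by (rule lipschitz_ode_unique_nonneg[OF lipschitz_on_minus[OF F] reverse[OF u] reverse[OF w]])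
       (use \<open>u 0 = w 0\<close> False in auto)
  then show ?thesis by simp
qed

lemma flow_add:
  fixes T :: "real \<Rightarrow> 'a::real_inner \<Rightarrow> 'a"
  assumes "L-lipschitz_on UNIV V"
    and flow0: "\<And>X. T 0 X = X"
    and flow: "\<And>X t. ((\<lambda>s. T s X) has_vector_derivative V (T t X)) (at t)"
  shows "T t (T s X) = T (t + s) X"
proof -
  have "((\<lambda>\<tau>. T (\<tau> + s) X) has_vector_derivative V (T (\<tau> + s) X)) (at \<tau>)" for \<tau>
  proof -
    have "((\<lambda>\<tau>. \<tau> + s) has_vector_derivative 1) (at \<tau>)" by (auto intro!: derivative_eq_intros)
    from vector_diff_chain_at[OF this flow[of X "\<tau> + s"]] show ?thesis by (simp add: o_def)
  qed
  then have "(\<lambda>\<tau>. T \<tau> (T s X)) t = (\<lambda>\<tau>. T (\<tau> + s) X) t"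
    by (rule lipschitz_ode_unique[OF assms(1) flow]) (simp add: flow0)
  then show ?thesis by simp
qed

section \<open>Charts adapted to a tangential field\<close>

lemma linear_nonzero_at_Basis:
  fixes f :: "'a::euclidean_space \<Rightarrow> 'b::real_vector"
  assumes "linear f" "f \<noteq> (\<lambda>_. 0)"
  obtains b where "b \<in> Basis" "f b \<noteq> 0"
  using linear_eq_stdbasis[OF assms(1) linear_zero] assms(2) by blast

lemma linear_eq_0_if_kernel_orthogonal:
  fixes D :: "'a::real_inner \<Rightarrow> real"
  assumes D: "linear D" "D b \<noteq> 0" and "n \<noteq> 0"
    and ker: "\<And>v. D v = 0 \<Longrightarrow> n \<bullet> v = 0" and "n \<bullet> x = 0"
  shows "D x = 0"
proof -
  have proj: "n \<bullet> v = D v / D b * (n \<bullet> b)" for v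
  proof -
    have "D (v - (D v / D b) *\<^sub>R b) = 0"
      using D by (simp add: linear_diff linear_scale)
    then have "n \<bullet> (v - (D v / D b) *\<^sub>R b) = 0" by (rule ker)
    then show ?thesis by (simp add: inner_diff_right)
  qed
  have "n \<bullet> b \<noteq> 0" using proj[of n] \<open>n \<noteq> 0\<close> by auto
  then show ?thesis using proj[of x] \<open>n \<bullet> x = 0\<close> D(2) by simp
qed

lemma has_real_derivative_compose_path:
  fixes \<phi> :: "'a::real_normed_vector \<Rightarrow> real"
  assumes "(u has_vector_derivative v) (at t)" "(\<phi> has_derivative D) (at (u t))"
  shows "((\<lambda>t. \<phi> (u t)) has_real_derivative D v) (at t)"
  using vector_derivative_diff_chain_within[OF assms(1) has_derivative_subset[OF assms(2)]]
  by (simp add: has_real_derivative_iff_has_vector_derivative o_def)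

lemma convex_add_scaleR_mem:
  fixes x e :: "'a::real_vector"
  assumes "convex S" "x \<in> S" "x + s *\<^sub>R e \<in> S" "0 \<le> \<sigma>" "\<sigma> \<le> s"
  shows "x + \<sigma> *\<^sub>R e \<in> S"
proof (cases "s = 0")
  case True
  then show ?thesis using assms by simp
next
  case False
  then have "x + \<sigma> *\<^sub>R e = (1 - \<sigma> / s) *\<^sub>R x + (\<sigma> / s) *\<^sub>R (x + s *\<^sub>R e)"
    by (simp add: algebra_simps)
  also have "\<dots> \<in> S" using assms False by (intro convexD) auto
  finally show ?thesis .
qed

lemma measure_disjoint_translates_le:
  fixes A B :: "'a::euclidean_space set"
  assumes A: "A \<in> lmeasurable" and B: "B \<in> lmeasurable"
    and sub: "\<And>k. k < N \<Longrightarrow> (+) (a k) ` A \<subseteq> B"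
    and disj: "\<And>j k. j < k \<Longrightarrow> k < N \<Longrightarrow> (+) (a j) ` A \<inter> (+) (a k) ` A = {}"
  shows "real N * measure lebesgue A \<le> measure lebesgue B"
proof -
  have "pairwise (\<lambda>j k. disjnt ((+) (a j) ` A) ((+) (a k) ` A)) {..<N}"
    unfolding pairwise_def disjnt_def by (metis Int_commute disj lessThan_iff linorder_neqE_nat)
  then have "real N * measure lebesgue A = measure lebesgue (\<Union>k<N. (+) (a k) ` A)"
    by (simp add: measure_UNION' measurable_translation[OF A] measure_translation)
  also have "\<dots> \<le> measure lebesgue B"
    using sub
    by (intro measure_mono_fmeasurable B) (auto intro: fmeasurableD measurable_translation[OF A])
  finally show ?thesis .
qed

definition tangential_chart ::
    "'a::euclidean_space set \<Rightarrow> ('a \<Rightarrow> 'a) \<Rightarrow> 'a \<Rightarrow> real \<Rightarrow> ('a \<Rightarrow> real) \<Rightarrow> 'a \<Rightarrow> real \<Rightarrow> real \<Rightarrow> bool"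
  where "tangential_chart \<Gamma> V p r \<phi> e c L \<longleftrightarrow>
    norm e = 1 \<and>
    (\<forall>x\<in>cball p r. (\<phi> has_derivative frechet_derivative \<phi> (at x)) (at x) \<and>
       c \<le> frechet_derivative \<phi> (at x) e \<and> (x \<in> \<Gamma> \<longleftrightarrow> \<phi> x = 0) \<and>
       (x \<in> \<Gamma> \<longrightarrow> frechet_derivative \<phi> (at x) (V x) = 0)) \<and>
    L-lipschitz_on (cball p r) (\<lambda>x. frechet_derivative \<phi> (at x) (V x))"

lemma tangential_chart_mono:
  assumes "tangential_chart \<Gamma> V p r \<phi> e c L" "c' \<le> c" "L \<le> L'"
  shows "tangential_chart \<Gamma> V p r \<phi> e c' L'"
  using assms unfolding tangential_chart_def by (auto intro: lipschitz_on_mono order_trans)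

lemma Ck_on_Suc_transversal_direction:
  fixes \<phi> :: "'a::euclidean_space \<Rightarrow> real"
  assumes \<phi>: "Ck_on (Suc k) U \<phi>" and U: "open U" "p \<in> U"
    and nondeg: "frechet_derivative \<phi> (at p) \<noteq> (\<lambda>_. 0)"
  obtains e c r where "norm e = 1" "0 < c" "0 < r" "cball p r \<subseteq> U"
    "\<And>x. x \<in> cball p r \<Longrightarrow> c \<le> frechet_derivative \<phi> (at x) e"
proof -
  define D where "D x = frechet_derivative \<phi> (at x)" for x
  have lin: "linear (D x)" if "x \<in> U" for x
    unfolding D_def using Ck_on_Suc_has_derivative[OF \<phi> U(1) that] has_derivative_linear by blast
  obtain b where b: "b \<in> Basis" "D p b \<noteq> 0"
    using linear_nonzero_at_Basis[OF lin[OF U(2)]] nondeg unfolding D_def by blast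
  define e where "e = sgn (D p b) *\<^sub>R b"
  define c where "c = \<bar>D p b\<bar> / 2"
  have De: "D x e = sgn (D p b) * D x b" if "x \<in> U" for x
    using lin[OF that] by (simp add: e_def linear_scale)
  have "continuous_on U (\<lambda>x. sgn (D p b) * D x b)"
    using Ck_on_Suc_continuous_on_partial[OF \<phi> b(1)] unfolding D_def by (intro continuous_intros)
  then have "continuous_on U (\<lambda>x. D x e)" by (simp add: De cong: continuous_on_cong)
  then have "open (U \<inter> (\<lambda>x. D x e) -` {c<..})"
    by (rule continuous_open_preimage[OF _ U(1) open_greaterThan])
  moreover have "p \<in> U \<inter> (\<lambda>x. D x e) -` {c<..}"
    using U(2) b(2) by (auto simp: De c_def sgn_if)
  ultimately obtain r where r: "0 < r" "cball p r \<subseteq> U \<inter> (\<lambda>x. D x e) -` {c<..}"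
    using open_contains_cball by blast
  show ?thesis
  proof (rule that[of e c r])
    show "norm e = 1" using b by (simp add: e_def abs_sgn)
    show "0 < c" using b(2) by (simp add: c_def)
  qed (use r in \<open>auto simp: D_def less_imp_le\<close>)
qed

lemma local_C3_defining_fun_derivative_tangent:
  assumes loc: "local_C3_defining_fun \<Gamma> p U \<phi>" and normal: "unit_normal_field \<Gamma> n"
    and z: "z \<in> U" "z \<in> \<Gamma>" and tangent: "v \<bullet> n z = 0"
  shows "frechet_derivative \<phi> (at z) v = 0"
proof -
  have loc_z: "local_C3_defining_fun \<Gamma> z U \<phi>" using loc z(1) unfolding local_C3_defining_fun_def by blast
  then have n: "n z \<noteq> 0" "\<And>w. frechet_derivative \<phi> (at z) w = 0 \<Longrightarrow> n z \<bullet> w = 0"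
    using normal z(2) unfolding unit_normal_field_def by auto
  have "Ck_on (Suc (Suc (Suc 0))) U \<phi>" "open U"
    using loc unfolding local_C3_defining_fun_def by (auto simp: numeral_3_eq_3)
  then have "linear (frechet_derivative \<phi> (at z))"
    using Ck_on_Suc_has_derivative z(1) has_derivative_linear by blast
  moreover obtain w where "frechet_derivative \<phi> (at z) w \<noteq> 0"
    using loc_z z unfolding local_C3_defining_fun_def by (auto simp: fun_eq_iff)
  ultimately show ?thesis
    using linear_eq_0_if_kernel_orthogonal[OF _ _ n] tangent by (simp add: inner_commute)
qed

lemma tangential_chart_exists:
  fixes \<Gamma> :: "'a::euclidean_space set" and V n :: "'a \<Rightarrow> 'a"
  assumes loc: "local_C3_defining_fun \<Gamma> p U \<phi>" and normal: "unit_normal_field \<Gamma> n"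
    and tangent: "\<And>q. q \<in> \<Gamma> \<Longrightarrow> V q \<bullet> n q = 0" and V: "Ck_on (Suc k) U V" and "p \<in> \<Gamma>"
  obtains r e c L where "0 < r" "0 < c" "tangential_chart \<Gamma> V p r \<phi> e c L"
proof -
  have U: "open U" "p \<in> U" and \<phi>: "Ck_on (Suc (Suc (Suc 0))) U \<phi>"
    and zero: "\<And>x. x \<in> U \<Longrightarrow> x \<in> \<Gamma> \<longleftrightarrow> \<phi> x = 0"
    and nondeg: "frechet_derivative \<phi> (at p) \<noteq> (\<lambda>_. 0)"
    using loc \<open>p \<in> \<Gamma>\<close> unfolding local_C3_defining_fun_def by (auto simp: numeral_3_eq_3)
  obtain e c r where e: "norm e = 1" "0 < c" "0 < r" "cball p r \<subseteq> U"
    "\<And>x. x \<in> cball p r \<Longrightarrow> c \<le> frechet_derivative \<phi> (at x) e"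
    using Ck_on_Suc_transversal_direction[OF \<phi> U nondeg] by blast
  obtain L where L: "L-lipschitz_on (cball p r) (\<lambda>x. frechet_derivative \<phi> (at x) (V x))"
    by (rule lipschitz_on_frechet_derivative_apply[OF \<phi> V U(1) compact_cball convex_cball e(4)])
  have "tangential_chart \<Gamma> V p r \<phi> e c L"
    unfolding tangential_chart_def
    using e L zero Ck_on_Suc_has_derivative[OF \<phi> U(1)]
      local_C3_defining_fun_derivative_tangent[OF loc normal _ _ tangent] by blast
  with e(3,2) show ?thesis by (rule that)
qed

lemma C3_closed_hypersurface_tangential_chart:
  assumes hyp: "C3_closed_hypersurface \<Gamma>" and normal: "unit_normal_field \<Gamma> n"
    and tangent: "\<And>q. q \<in> \<Gamma> \<Longrightarrow> V q \<bullet> n q = 0" and V: "Ck_on (Suc k) UNIV V" and p: "p \<in> \<Gamma>"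
  shows "\<exists>r \<phi> e c L. 0 < r \<and> 0 < c \<and> tangential_chart \<Gamma> V p r \<phi> e c L"
proof -
  obtain U \<phi> where "local_C3_defining_fun \<Gamma> p U \<phi>"
    using hyp p unfolding C3_closed_hypersurface_def by blast
  then obtain r e c L where "0 < r" "0 < c" "tangential_chart \<Gamma> V p r \<phi> e c L"
    by (rule tangential_chart_exists[OF _ normal tangent Ck_on_subset[OF V subset_UNIV] p])
  then show ?thesis by blast
qed

context
  fixes \<Gamma> :: "'a::euclidean_space set" and V :: "'a \<Rightarrow> 'a" and p e :: 'a and \<phi> :: "'a \<Rightarrow> real"
    and r c L :: real
  assumes chart: "tangential_chart \<Gamma> V p r \<phi> e c L"
begin

lemma tangential_chart_unit: "norm e = 1"
  and tangential_chart_has_derivative: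
    "x \<in> cball p r \<Longrightarrow> (\<phi> has_derivative frechet_derivative \<phi> (at x)) (at x)"
  and tangential_chart_transversal: "x \<in> cball p r \<Longrightarrow> c \<le> frechet_derivative \<phi> (at x) e"
  and tangential_chart_zero_iff: "x \<in> cball p r \<Longrightarrow> x \<in> \<Gamma> \<longleftrightarrow> \<phi> x = 0"
  and tangential_chart_tangent:
    "x \<in> cball p r \<Longrightarrow> x \<in> \<Gamma> \<Longrightarrow> frechet_derivative \<phi> (at x) (V x) = 0"
  and tangential_chart_lipschitz:
    "L-lipschitz_on (cball p r) (\<lambda>x. frechet_derivative \<phi> (at x) (V x))"
  using chart unfolding tangential_chart_def by blast+

lemma tangential_chart_continuous_on: "continuous_on (cball p r) \<phi>"
  using tangential_chart_has_derivative
  by (blast intro: continuous_at_imp_continuous_on has_derivative_continuous)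

lemma tangential_chart_increasing:
  assumes x: "x \<in> cball p r" "x + s *\<^sub>R e \<in> cball p r" and "0 \<le> s"
  shows "\<phi> x + c * s \<le> \<phi> (x + s *\<^sub>R e)"
proof -
  let ?g = "\<lambda>\<sigma>. \<phi> (x + \<sigma> *\<^sub>R e) - c * \<sigma>"
  have "?g 0 \<le> ?g s"
  proof (rule DERIV_nonneg_imp_nondecreasing[OF \<open>0 \<le> s\<close>])
    fix \<sigma> assume "0 \<le> \<sigma>" "\<sigma> \<le> s"
    then have in_ball: "x + \<sigma> *\<^sub>R e \<in> cball p r"
      using convex_add_scaleR_mem[OF convex_cball x] by blast
    have "((\<lambda>\<sigma>. x + \<sigma> *\<^sub>R e) has_vector_derivative e) (at \<sigma>)"
      by (auto intro!: derivative_eq_intros)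
    from has_real_derivative_compose_path[OF this tangential_chart_has_derivative[OF in_ball]]
    have "(?g has_real_derivative frechet_derivative \<phi> (at (x + \<sigma> *\<^sub>R e)) e - c) (at \<sigma>)"
      by (auto intro!: derivative_eq_intros)
    moreover have "c \<le> frechet_derivative \<phi> (at (x + \<sigma> *\<^sub>R e)) e"
      using tangential_chart_transversal[OF in_ball] .
    ultimately show "\<exists>y. (?g has_real_derivative y) (at \<sigma>) \<and> 0 \<le> y" by force
  qed
  then show ?thesis by simp
qed

lemma tangential_chart_infdist_le:
  assumes "0 < c" "y \<in> cball p (r / 2)" "\<bar>\<phi> y\<bar> \<le> c * r / 2"
  shows "infdist y \<Gamma> \<le> \<bar>\<phi> y\<bar> / c"
proof -
  define s where "s = \<bar>\<phi> y\<bar> / c"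
  have s: "0 \<le> s" "s \<le> r / 2" "c * s = \<bar>\<phi> y\<bar>" using assms by (auto simp: s_def field_simps)
  have line: "y + \<sigma> *\<^sub>R e \<in> cball p r" if "\<bar>\<sigma>\<bar> \<le> s" for \<sigma>
  proof -
    have "dist p (y + \<sigma> *\<^sub>R e) \<le> dist p y + dist y (y + \<sigma> *\<^sub>R e)" by (rule dist_triangle)
    also have "\<dots> \<le> r / 2 + s"
      using assms(2) that tangential_chart_unit by (intro add_mono) (auto simp: dist_norm)
    finally show ?thesis using s by simp
  qed
  have ends: "y + (- s) *\<^sub>R e \<in> cball p r" "y \<in> cball p r" "y + s *\<^sub>R e \<in> cball p r"
    using line[of "- s"] line[of 0] line[of s] s by auto
  have "\<phi> (y + (- s) *\<^sub>R e) + c * s \<le> \<phi> y"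
    using tangential_chart_increasing[of "y + (- s) *\<^sub>R e" s] ends s by simp
  then have "\<phi> (y + (- s) *\<^sub>R e) \<le> 0" using s(3) abs_ge_self[of "\<phi> y"] by linarith
  moreover have "\<phi> y + c * s \<le> \<phi> (y + s *\<^sub>R e)"
    using tangential_chart_increasing[of y s] ends s by simp
  then have "0 \<le> \<phi> (y + s *\<^sub>R e)" using s(3) abs_ge_minus_self[of "\<phi> y"] by linarith
  moreover have "continuous_on {- s..s} (\<lambda>\<sigma>. \<phi> (y + \<sigma> *\<^sub>R e))"
    using line
    by (intro continuous_on_compose2[OF tangential_chart_continuous_on] continuous_intros) auto
  ultimately obtain \<sigma> where \<sigma>: "- s \<le> \<sigma>" "\<sigma> \<le> s" "\<phi> (y + \<sigma> *\<^sub>R e) = 0"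
    using IVT'[of "\<lambda>\<sigma>. \<phi> (y + \<sigma> *\<^sub>R e)" "- s" 0 s] s by auto
  then have "y + \<sigma> *\<^sub>R e \<in> \<Gamma>" using line tangential_chart_zero_iff by auto
  then have "infdist y \<Gamma> \<le> dist y (y + \<sigma> *\<^sub>R e)" by (rule infdist_le)
  also have "\<dots> \<le> s" using \<sigma> tangential_chart_unit by (simp add: dist_norm)
  finally show ?thesis by (simp add: s_def)
qed

lemma tangential_chart_flow_quadratic:
  assumes u: "\<And>t. (u has_vector_derivative V (u t)) (at t)" and M: "\<And>x. norm (V x) \<le> M"
    and "u s0 \<in> \<Gamma>" and in_chart: "\<And>\<sigma>. \<sigma> \<in> closed_segment s0 s \<Longrightarrow> u \<sigma> \<in> cball p r"
  shows "\<bar>\<phi> (u s)\<bar> \<le> L * M * (s - s0)\<^sup>2"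
proof -
  define g' where "g' \<sigma> = frechet_derivative \<phi> (at (u \<sigma>)) (V (u \<sigma>))" for \<sigma>
  have s0: "u s0 \<in> cball p r" using in_chart by simp
  have "0 \<le> M" using M[of 0] norm_ge_zero order_trans by blast
  have "((\<lambda>\<sigma>. \<phi> (u \<sigma>)) has_vector_derivative g' \<sigma>) (at \<sigma> within closed_segment s0 s)"
    if "\<sigma> \<in> closed_segment s0 s" for \<sigma>
    using has_real_derivative_compose_path[OF u tangential_chart_has_derivative[OF in_chart[OF that]]]
    unfolding g'_def has_real_derivative_iff_has_vector_derivative
    by (rule has_vector_derivative_at_within)
  moreover have "norm (g' \<sigma> - g' s0) \<le> L * (M * \<bar>s - s0\<bar>)" if "\<sigma> \<in> closed_segment s0 s" for \<sigma>
  proof -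
    have "norm (g' \<sigma> - g' s0) \<le> L * dist (u \<sigma>) (u s0)"
      using lipschitz_onD[OF tangential_chart_lipschitz in_chart[OF that] s0]
      by (simp add: g'_def dist_real_def)
    also have "\<dots> \<le> L * (M * \<bar>\<sigma> - s0\<bar>)"
      using norm_diff_le_of_vector_derivative_bound[OF u M]
        lipschitz_on_nonneg[OF tangential_chart_lipschitz]
      by (intro mult_left_mono) (auto simp: dist_norm)
    also have "\<dots> \<le> L * (M * \<bar>s - s0\<bar>)"
      using that \<open>0 \<le> M\<close> lipschitz_on_nonneg[OF tangential_chart_lipschitz]
      by (intro mult_left_mono) (auto simp: closed_segment_eq_real_ivl split: if_splits)
    finally show ?thesis .
  qed
  ultimately have "norm (\<phi> (u s) - \<phi> (u s0) - (s - s0) *\<^sub>R g' s0)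
      \<le> norm (s - s0) * (L * (M * \<bar>s - s0\<bar>))"
    by (intro vector_differentiable_bound_linearization[of "closed_segment s0 s"]) auto
  moreover have "\<phi> (u s0) = 0" "g' s0 = 0"
    using tangential_chart_zero_iff[OF s0] tangential_chart_tangent[OF s0] \<open>u s0 \<in> \<Gamma>\<close>
    by (auto simp: g'_def)
  ultimately show ?thesis by (simp add: power2_eq_square abs_mult_self_eq algebra_simps)
qed

lemma tangential_chart_slab_lmeasurable:
  assumes "0 < r"
  shows "{x \<in> cball p (r / 2). \<bar>\<phi> x\<bar> \<le> \<delta>} \<in> lmeasurable"
proof (rule lmeasurable_compact)
  have "continuous_on (cball p (r / 2)) \<phi>"
    using tangential_chart_continuous_on subset_cball[of "r / 2" r p] assms
    by (auto intro: continuous_on_subset)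
  then have "closed (cball p (r / 2) \<inter> \<phi> -` {- \<delta>..\<delta>})"
    by (intro continuous_closed_preimage) auto
  moreover have "{x \<in> cball p (r / 2). \<bar>\<phi> x\<bar> \<le> \<delta>} = cball p (r / 2) \<inter> \<phi> -` {- \<delta>..\<delta>}"
    by auto
  ultimately show "compact {x \<in> cball p (r / 2). \<bar>\<phi> x\<bar> \<le> \<delta>}"
    by (metis (no_types, lifting) bounded_cball bounded_subset compact_eq_bounded_closed inf_le1)
qed

lemma tangential_chart_slab_gap:
  assumes "y \<in> cball p r" "y + d *\<^sub>R e \<in> cball p r" "0 \<le> d"
    and "\<bar>\<phi> y\<bar> \<le> \<delta>" "\<bar>\<phi> (y + d *\<^sub>R e)\<bar> \<le> \<delta>"
  shows "c * d \<le> 2 * \<delta>"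
  using tangential_chart_increasing[OF assms(1-3)] assms(4,5) by linarith

lemma tangential_chart_slab_measure:
  assumes c: "0 < c" and r: "0 < r" and \<delta>: "0 < \<delta>" "\<delta> \<le> c * r / 12"
  shows "measure lebesgue {x \<in> cball p (r / 2). \<bar>\<phi> x\<bar> \<le> \<delta>}
    \<le> 12 * measure lebesgue (cball p r) / (r * c) * \<delta>"
proof -
  \<comment> \<open>About r c / (6 \<delta>) translates of the slab by multiples of 3 \<delta> / c along e fit
    disjointly into \<open>cball p r\<close>.\<close>
  define A where "A = {x \<in> cball p (r / 2). \<bar>\<phi> x\<bar> \<le> \<delta>}"
  define h where "h = 3 * \<delta> / c"
  define X where "X = r / (2 * h)"
  define N where "N = nat \<lfloor>X\<rfloor>"
  have h: "0 < h" "c * h = 3 * \<delta>" using c \<delta> by (auto simp: h_def)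
  have X: "X * h = r / 2" "r * c / (12 * \<delta>) = X / 2" "2 \<le> X"
    using c \<delta> h by (auto simp: X_def h_def field_simps)
  have "real N = of_int \<lfloor>X\<rfloor>" using X(3) by (simp add: N_def)
  then have "real N \<le> X" "X - 1 \<le> real N" using floor_correct[of X] by auto
  then have N: "real N * h \<le> r / 2" "r * c / (12 * \<delta>) \<le> real N"
    using X h(1) mult_right_mono[of "real N" X h] by auto
  have A_chart: "A \<subseteq> cball p r" unfolding A_def using r by auto
  have "real N * measure lebesgue A \<le> measure lebesgue (cball p r)"
  proof (rule measure_disjoint_translates_le[where a = "\<lambda>k. (real k * h) *\<^sub>R e"])
    show "A \<in> lmeasurable" unfolding A_def using r by (rule tangential_chart_slab_lmeasurable)
    show "(+) ((real k * h) *\<^sub>R e) ` A \<subseteq> cball p r" if "k < N" for k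
    proof
      fix y assume "y \<in> (+) ((real k * h) *\<^sub>R e) ` A"
      then obtain x where x: "x \<in> A" "y = (real k * h) *\<^sub>R e + x" by blast
      have "real k * h \<le> real N * h" using that h by (intro mult_right_mono) auto
      moreover have "dist p x \<le> r / 2" "dist x y = real k * h"
        using x h tangential_chart_unit by (auto simp: A_def dist_norm)
      ultimately show "y \<in> cball p r" using dist_triangle[of p y x] N(1) by simp
    qed
    show "(+) ((real j * h) *\<^sub>R e) ` A \<inter> (+) ((real k * h) *\<^sub>R e) ` A = {}"
      if "j < k" "k < N" for j k
    proof (rule ccontr)
      assume "(+) ((real j * h) *\<^sub>R e) ` A \<inter> (+) ((real k * h) *\<^sub>R e) ` A \<noteq> {}"
      then obtain x y where xy: "x \<in> A" "y \<in> A" "(real j * h) *\<^sub>R e + x = (real k * h) *\<^sub>R e + y"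
        by blast
      define d where "d = real (k - j) * h"
      have "x = y + d *\<^sub>R e"
        using xy(3) \<open>j < k\<close> by (simp add: d_def of_nat_diff algebra_simps)
      then have yd: "y + d *\<^sub>R e \<in> A" using xy(1) by simp
      have "c * d \<le> 2 * \<delta>"
      proof (rule tangential_chart_slab_gap)
        show "y \<in> cball p r" "y + d *\<^sub>R e \<in> cball p r" using xy(2) yd A_chart by blast+
        show "0 \<le> d" using h by (simp add: d_def)
        show "\<bar>\<phi> y\<bar> \<le> \<delta>" "\<bar>\<phi> (y + d *\<^sub>R e)\<bar> \<le> \<delta>" using xy(2) yd by (auto simp: A_def)
      qed
      moreover have "c * h \<le> c * d"
        using \<open>j < k\<close> c h by (intro mult_left_mono) (auto simp: d_def)
      ultimately show False using h \<delta> by linarith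
    qed
  qed auto
  with N(2) have "r * c / (12 * \<delta>) * measure lebesgue A \<le> measure lebesgue (cball p r)"
    by (meson measure_nonneg mult_right_mono order_trans)
  then show ?thesis using r c \<delta> by (simp add: A_def field_simps)
qed

end

section \<open>Finitely many charts and the quadratic estimates\<close>

definition flow_tube :: "(real \<Rightarrow> 'a \<Rightarrow> 'a) \<Rightarrow> 'a set \<Rightarrow> real \<Rightarrow> 'a set"
  where "flow_tube T \<Gamma> t = {x. \<exists>s. \<bar>s\<bar> \<le> \<bar>t\<bar> \<and> T s x \<in> \<Gamma>}"

lemma closed_segment_0_abs_le: "(s::real) \<in> closed_segment 0 t \<Longrightarrow> \<bar>s\<bar> \<le> \<bar>t\<bar> \<and> \<bar>s - t\<bar> \<le> \<bar>t\<bar>"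
  by (auto simp: closed_segment_eq_real_ivl split: if_splits)

lemma flow_symmetric_difference_subset_flow_tube:
  fixes T :: "real \<Rightarrow> 'a::real_normed_vector \<Rightarrow> 'a"
  assumes cont: "\<And>X. continuous_on UNIV (\<lambda>s. T s X)"
    and add: "\<And>t s X. T t (T s X) = T (t + s) X" and flow0: "\<And>X. T 0 X = X"
    and frontier: "frontier \<Omega> \<subseteq> \<Gamma>"
  shows "{x. indicator (T t ` \<Omega>) x \<noteq> (indicator \<Omega> x :: real)} \<subseteq> flow_tube T \<Gamma> t"
proof -
  have cross: "\<exists>s\<in>closed_segment 0 t'. T s y \<in> \<Gamma>" if "y \<in> \<Omega>" "T t' y \<notin> \<Omega>" for y t'
  proof -
    let ?C = "(\<lambda>s. T s y) ` closed_segment 0 t'"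
    have "connected ?C"
      using cont
      by (intro connected_continuous_image connected_segment) (auto intro: continuous_on_subset)
    moreover have "T 0 y \<in> ?C" "T t' y \<in> ?C" by auto
    then have "?C \<inter> \<Omega> \<noteq> {}" "?C - \<Omega> \<noteq> {}" using that flow0[of y] by auto
    ultimately have "?C \<inter> frontier \<Omega> \<noteq> {}" by (rule connected_Int_frontier)
    then show ?thesis using frontier by auto
  qed
  show ?thesis
  proof
    fix x assume "x \<in> {x. indicator (T t ` \<Omega>) x \<noteq> (indicator \<Omega> x :: real)}"
    then consider "x \<in> T t ` \<Omega>" "x \<notin> \<Omega>" | "x \<in> \<Omega>" "x \<notin> T t ` \<Omega>"
      by (cases "x \<in> \<Omega>"; cases "x \<in> T t ` \<Omega>") (auto simp: indicator_def)
    then show "x \<in> flow_tube T \<Gamma> t"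
    proof cases
      case 1
      then obtain y where y: "y \<in> \<Omega>" "x = T t y" by blast
      then obtain s where "s \<in> closed_segment 0 t" "T s y \<in> \<Gamma>" using cross 1(2) by blast
      moreover have "T (s - t) x = T s y" using y(2) add by simp
      ultimately show ?thesis
        unfolding flow_tube_def using closed_segment_0_abs_le
        by (metis (mono_tags, lifting) mem_Collect_eq)
    next
      case 2
      have "T (- t) x \<notin> \<Omega>"
        using 2(2) add[of t "- t" x] flow0[of x] by (metis add.right_inverse image_eqI)
      then obtain s where "s \<in> closed_segment 0 (- t)" "T s x \<in> \<Gamma>" using cross 2(1) by blast
      then show ?thesis unfolding flow_tube_def using closed_segment_0_abs_le by fastforce
    qed
  qed
qed

text \<open>Covering by balls of a quarter of the chart radius leaves room for a flow line started on
  \<Gamma> to travel a distance \<rho>/4 without leaving the half-radius ball of its chart.\<close>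

locale tangential_chart_cover =
  fixes \<Gamma> :: "'a::euclidean_space set" and V :: "'a \<Rightarrow> 'a" and P :: "'a set"
    and \<phi> :: "'a \<Rightarrow> 'a \<Rightarrow> real" and e :: "'a \<Rightarrow> 'a" and r :: "'a \<Rightarrow> real" and \<rho> c L :: real
  assumes finite_P: "finite P"
    and cover: "\<Gamma> \<subseteq> (\<Union>p\<in>P. ball p (r p / 4))"
    and radius: "\<And>p. p \<in> P \<Longrightarrow> \<rho> \<le> r p"
    and chart: "\<And>p. p \<in> P \<Longrightarrow> tangential_chart \<Gamma> V p (r p) (\<phi> p) (e p) c L"
    and constants: "0 < \<rho>" "0 < c" "0 \<le> L"

lemma tangential_chart_cover_exists:
  assumes "compact \<Gamma>"
    and "\<And>p. p \<in> \<Gamma> \<Longrightarrow> \<exists>r \<phi> e c L. 0 < r \<and> 0 < c \<and> tangential_chart \<Gamma> V p r \<phi> e c L"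
  obtains P \<phi> e r \<rho> c L where "tangential_chart_cover \<Gamma> V P \<phi> e r \<rho> c L"
proof -
  obtain R \<Phi> E C LC where charts: "\<And>p. p \<in> \<Gamma> \<Longrightarrow>
      0 < R p \<and> 0 < C p \<and> tangential_chart \<Gamma> V p (R p) (\<Phi> p) (E p) (C p) (LC p)"
    using assms(2) by metis
  obtain P where P: "P \<subseteq> \<Gamma>" "finite P" "\<Gamma> \<subseteq> (\<Union>p\<in>P. ball p (R p / 4))"
    using compactE_image[OF assms(1), of \<Gamma> "\<lambda>p. ball p (R p / 4)"] charts
    by (metis (no_types, lifting) UN_I centre_in_ball divide_pos_pos open_ball subsetI zero_less_numeral)
  define \<rho> where "\<rho> = Min (insert 1 (R ` P))"
  define c where "c = Min (insert 1 (C ` P))"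
  define L where "L = Max (insert 0 (LC ` P))"
  have "tangential_chart_cover \<Gamma> V P \<Phi> E R \<rho> c L"
  proof
    show "\<rho> \<le> R p" if "p \<in> P" for p using P(2) that by (simp add: \<rho>_def)
    show "tangential_chart \<Gamma> V p (R p) (\<Phi> p) (E p) c L" if "p \<in> P" for p
    proof (rule tangential_chart_mono)
      show "tangential_chart \<Gamma> V p (R p) (\<Phi> p) (E p) (C p) (LC p)" using charts P(1) that by blast
      show "c \<le> C p" using P(2) that by (simp add: c_def)
      show "LC p \<le> L" using P(2) that by (simp add: L_def)
    qed
    have "\<forall>p\<in>P. 0 < R p \<and> 0 < C p" using charts P(1) by blast
    then show "0 < \<rho>" "0 < c" using P(2) by (auto simp: \<rho>_def c_def)
    show "0 \<le> L" using P(2) by (simp add: L_def)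
  qed (use P in auto)
  then show ?thesis by (rule that)
qed

locale tangential_chart_flow = tangential_chart_cover +
  fixes T :: "real \<Rightarrow> 'a::euclidean_space \<Rightarrow> 'a" and M :: real
  assumes M: "0 < M" "\<And>x. norm (V x) \<le> M"
    and flow0: "\<And>X. T 0 X = X"
    and flow: "\<And>X t. ((\<lambda>s. T s X) has_vector_derivative V (T t X)) (at t)"
begin

definition time_bound :: real
  where "time_bound = min 1 (min (\<rho> / (4 * M)) (c * \<rho> / (12 * (L * M + 1))))"

lemma LM_nonneg: "0 \<le> L * M"
  using constants(3) M(1) by simp

lemma time_bound_pos: "0 < time_bound"
  using constants M(1) LM_nonneg by (simp add: time_bound_def add_nonneg_pos)

lemma time_bound_le:
  assumes "\<bar>t\<bar> \<le> time_bound"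
  shows "M * \<bar>t\<bar> \<le> \<rho> / 4" "(L * M + 1) * t\<^sup>2 \<le> c * \<rho> / 12"
proof -
  define Q where "Q = L * M + 1"
  have Q: "0 < Q" using LM_nonneg by (simp add: Q_def)
  have t: "\<bar>t\<bar> \<le> \<rho> / (4 * M)" "\<bar>t\<bar> \<le> c * \<rho> / (12 * Q)" "\<bar>t\<bar> \<le> 1"
    using assms unfolding time_bound_def Q_def by simp_all
  have "M * \<bar>t\<bar> \<le> M * (\<rho> / (4 * M))" by (rule mult_left_mono[OF t(1) less_imp_le[OF M(1)]])
  then show "M * \<bar>t\<bar> \<le> \<rho> / 4" using M(1) by simp
  have "t\<^sup>2 = \<bar>t\<bar> * \<bar>t\<bar>" by (simp add: power2_eq_square)
  also have "\<dots> \<le> 1 * \<bar>t\<bar>" by (rule mult_right_mono[OF t(3) abs_ge_zero])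
  finally have "Q * t\<^sup>2 \<le> Q * \<bar>t\<bar>" using Q by simp
  also have "\<dots> \<le> Q * (c * \<rho> / (12 * Q))" by (rule mult_left_mono[OF t(2) less_imp_le[OF Q]])
  also have "\<dots> = c * \<rho> / 12" using Q by simp
  finally show "(L * M + 1) * t\<^sup>2 \<le> c * \<rho> / 12" unfolding Q_def .
qed

lemma flow_near_chart:
  assumes "T s0 y \<in> \<Gamma>" "M * \<bar>s - s0\<bar> \<le> \<rho> / 4"
  obtains p where "p \<in> P" "T s y \<in> cball p (r p / 2)" "\<bar>\<phi> p (T s y)\<bar> \<le> L * M * (s - s0)\<^sup>2"
proof -
  obtain p where p: "p \<in> P" "T s0 y \<in> ball p (r p / 4)" using cover assms(1) by blast
  have near: "T \<sigma> y \<in> cball p (r p / 2)" if "\<sigma> \<in> closed_segment s0 s" for \<sigma>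
  proof -
    have "dist (T s0 y) (T \<sigma> y) \<le> M * \<bar>\<sigma> - s0\<bar>"
      using norm_diff_le_of_vector_derivative_bound[OF flow M(2)]
      by (simp add: dist_norm norm_minus_commute)
    also have "\<dots> \<le> M * \<bar>s - s0\<bar>"
      using that M(1) by (intro mult_left_mono) (auto simp: closed_segment_eq_real_ivl split: if_splits)
    finally have "dist (T s0 y) (T \<sigma> y) \<le> r p / 4" using assms(2) radius[OF p(1)] by linarith
    then show ?thesis using p(2) dist_triangle[of p "T \<sigma> y" "T s0 y"] by simp
  qed
  have "cball p (r p / 2) \<subseteq> cball p (r p)"
    using radius[OF p(1)] constants(1) by (intro subset_cball) simp
  then have "\<bar>\<phi> p (T s y)\<bar> \<le> L * M * (s - s0)\<^sup>2"
    using near by (intro tangential_chart_flow_quadratic[OF chart[OF p(1)] flow M(2) assms(1)]) blast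
  then show ?thesis using that p(1) near[of s] by simp
qed

lemma infdist_flow_le:
  assumes "X \<in> \<Gamma>" "\<bar>t\<bar> \<le> time_bound"
  shows "infdist (T t X) \<Gamma> \<le> L * M / c * t\<^sup>2"
proof -
  obtain p where p: "p \<in> P" "T t X \<in> cball p (r p / 2)" "\<bar>\<phi> p (T t X)\<bar> \<le> L * M * t\<^sup>2"
    using flow_near_chart[of 0 X t] assms(1) time_bound_le(1)[OF assms(2)] flow0 by auto
  have "L * M * t\<^sup>2 \<le> (L * M + 1) * t\<^sup>2" by (simp add: algebra_simps)
  moreover have "c * \<rho> \<le> c * r p" using radius[OF p(1)] constants(2) by simp
  moreover have "0 < c * \<rho>" using constants(1,2) by simp
  ultimately have "\<bar>\<phi> p (T t X)\<bar> \<le> c * r p / 2"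
    using p(3) time_bound_le(2)[OF assms(2)] by linarith
  with tangential_chart_infdist_le[OF chart[OF p(1)] constants(2) p(2)]
  have "infdist (T t X) \<Gamma> \<le> \<bar>\<phi> p (T t X)\<bar> / c" .
  also have "\<dots> \<le> L * M * t\<^sup>2 / c" using p(3) constants(2) by (simp add: divide_right_mono)
  finally show ?thesis by simp
qed

lemma flow_tube_subset_slabs:
  assumes "M * \<bar>t\<bar> \<le> \<rho> / 4"
  shows "flow_tube T \<Gamma> t \<subseteq> (\<Union>p\<in>P. {x \<in> cball p (r p / 2). \<bar>\<phi> p x\<bar> \<le> L * M * t\<^sup>2})"
proof
  fix x assume "x \<in> flow_tube T \<Gamma> t"
  then obtain s where s: "\<bar>s\<bar> \<le> \<bar>t\<bar>" "T s x \<in> \<Gamma>" unfolding flow_tube_def by blast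
  have "M * \<bar>s\<bar> \<le> M * \<bar>t\<bar>" using s(1) M(1) by (simp add: mult_left_mono)
  then have "M * \<bar>0 - s\<bar> \<le> \<rho> / 4" using assms by simp
  then obtain p where p: "p \<in> P" "x \<in> cball p (r p / 2)" "\<bar>\<phi> p x\<bar> \<le> L * M * (0 - s)\<^sup>2"
    using flow_near_chart[OF s(2)] flow0 by metis
  moreover have "L * M * (0 - s)\<^sup>2 \<le> L * M * t\<^sup>2"
    using s(1) constants(3) M(1) by (intro mult_left_mono) (auto simp: abs_le_square_iff[symmetric])
  ultimately show "x \<in> (\<Union>p\<in>P. {x \<in> cball p (r p / 2). \<bar>\<phi> p x\<bar> \<le> L * M * t\<^sup>2})" by auto
qed

text \<open>Stated for subsets of the tube, since the tube itself is not shown to be measurable.\<close>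

lemma emeasure_flow_tube_le:
  assumes "A \<subseteq> flow_tube T \<Gamma> t" "t \<noteq> 0" "\<bar>t\<bar> \<le> time_bound"
  shows "emeasure lebesgue A \<le>
    ennreal ((\<Sum>p\<in>P. 12 * measure lebesgue (cball p (r p)) / (r p * c)) * ((L * M + 1) * t\<^sup>2))"
proof -
  define \<delta> where "\<delta> = (L * M + 1) * t\<^sup>2"
  define S where "S p = {x \<in> cball p (r p / 2). \<bar>\<phi> p x\<bar> \<le> \<delta>}" for p
  have "0 \<le> L * M * t\<^sup>2" using LM_nonneg by simp
  moreover have "0 < t\<^sup>2" using assms(2) by simp
  moreover have "\<delta> = t\<^sup>2 + L * M * t\<^sup>2" by (simp add: \<delta>_def algebra_simps)
  ultimately have \<delta>: "0 < \<delta>" "L * M * t\<^sup>2 \<le> \<delta>" by linarith+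
  have r: "0 < r p" "\<delta> \<le> c * r p / 12" if "p \<in> P" for p
  proof -
    have "c * \<rho> \<le> c * r p" using radius[OF that] constants(2) by simp
    then show "0 < r p" "\<delta> \<le> c * r p / 12"
      using radius[OF that] constants(1) time_bound_le(2)[OF assms(3)] by (auto simp: \<delta>_def)
  qed
  have S: "S p \<in> lmeasurable" if "p \<in> P" for p
    unfolding S_def using chart[OF that] r(1)[OF that] by (rule tangential_chart_slab_lmeasurable)
  have "{x \<in> cball p (r p / 2). \<bar>\<phi> p x\<bar> \<le> L * M * t\<^sup>2} \<subseteq> S p" for p
    using \<delta>(2) by (auto simp: S_def)
  then have "A \<subseteq> (\<Union>p\<in>P. S p)"
    using assms(1) flow_tube_subset_slabs[OF time_bound_le(1)[OF assms(3)]] by blast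
  then have "emeasure lebesgue A \<le> emeasure lebesgue (\<Union>p\<in>P. S p)"
    using S finite_P by (intro emeasure_mono) auto
  also have "\<dots> \<le> (\<Sum>p\<in>P. emeasure lebesgue (S p))"
    using S finite_P by (intro emeasure_subadditive_finite) auto
  also have "\<dots> = (\<Sum>p\<in>P. ennreal (measure lebesgue (S p)))"
    using S by (intro sum.cong refl emeasure_eq_measure2) auto
  also have "\<dots> \<le> (\<Sum>p\<in>P. ennreal (12 * measure lebesgue (cball p (r p)) / (r p * c) * \<delta>))"
    unfolding S_def using r constants(2) \<delta>(1)
    by (intro sum_mono ennreal_leI tangential_chart_slab_measure[OF chart]) auto
  also have "\<dots> = ennreal (\<Sum>p\<in>P. 12 * measure lebesgue (cball p (r p)) / (r p * c) * \<delta>)"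
    using r(1) constants(2) \<delta>(1) by (intro sum_ennreal mult_nonneg_nonneg divide_nonneg_pos) auto
  finally show ?thesis by (simp add: \<delta>_def sum_distrib_right)
qed

lemma emeasure_symmetric_difference_le:
  assumes add: "\<And>t s X. T t (T s X) = T (t + s) X"
    and "frontier \<Omega> \<subseteq> \<Gamma>" "\<bar>t\<bar> \<le> time_bound"
  shows "emeasure lebesgue {x. indicator (T t ` \<Omega>) x \<noteq> (indicator \<Omega> x :: real)} \<le>
    ennreal ((\<Sum>p\<in>P. 12 * measure lebesgue (cball p (r p)) / (r p * c)) * ((L * M + 1) * t\<^sup>2))"
proof (cases "t = 0")
  case False
  have "continuous_on UNIV (\<lambda>s. T s X)" for X
    using flow by (intro continuous_at_imp_continuous_on ballI has_vector_derivative_continuous)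
  then show ?thesis
    using emeasure_flow_tube_le[OF flow_symmetric_difference_subset_flow_tube[OF _ add flow0 assms(2)]
        False assms(3)] by blast
qed (simp add: flow0)

lemma quadratic_estimates:
  assumes add: "\<And>t s X. T t (T s X) = T (t + s) X"
  obtains \<tau> K where "0 < \<tau>" "0 < K"
    "\<And>X t. X \<in> \<Gamma> \<Longrightarrow> \<bar>t\<bar> \<le> \<tau> \<Longrightarrow> infdist (T t X) \<Gamma> \<le> K * t\<^sup>2"
    "\<And>\<Omega> t. frontier \<Omega> \<subseteq> \<Gamma> \<Longrightarrow> \<bar>t\<bar> \<le> \<tau> \<Longrightarrow>
      emeasure lebesgue {x. indicator (T t ` \<Omega>) x \<noteq> (indicator \<Omega> x :: real)} \<le> ennreal (K * t\<^sup>2)"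
proof -
  define S where "S = (\<Sum>p\<in>P. 12 * measure lebesgue (cball p (r p)) / (r p * c))"
  define K where "K = (L * M + 1) / c + S * (L * M + 1)"
  have S: "0 \<le> S"
    unfolding S_def using radius constants by (intro sum_nonneg divide_nonneg_pos) fastforce+
  have "0 \<le> S * (L * M + 1)" "0 < (L * M + 1) / c" using S LM_nonneg constants(2) by simp_all
  moreover have "L * M / c \<le> (L * M + 1) / c" using constants(2) by (simp add: divide_right_mono)
  ultimately have K: "L * M / c \<le> K" "S * (L * M + 1) \<le> K" "0 < K" unfolding K_def by linarith+
  show ?thesis
  proof (rule that[OF time_bound_pos])
    show "0 < K" by (rule K(3))
    show "infdist (T t X) \<Gamma> \<le> K * t\<^sup>2" if "X \<in> \<Gamma>" "\<bar>t\<bar> \<le> time_bound" for X t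
      using infdist_flow_le[OF that] mult_right_mono[OF K(1) zero_le_power2[of t]] by linarith
    show "emeasure lebesgue {x. indicator (T t ` \<Omega>) x \<noteq> (indicator \<Omega> x :: real)} \<le> ennreal (K * t\<^sup>2)"
      if "frontier \<Omega> \<subseteq> \<Gamma>" "\<bar>t\<bar> \<le> time_bound" for \<Omega> t
    proof -
      have "emeasure lebesgue {x. indicator (T t ` \<Omega>) x \<noteq> (indicator \<Omega> x :: real)}
          \<le> ennreal (S * ((L * M + 1) * t\<^sup>2))"
        unfolding S_def by (rule emeasure_symmetric_difference_le[OF add that])
      also have "\<dots> \<le> ennreal (K * t\<^sup>2)"
        using mult_right_mono[OF K(2) zero_le_power2[of t]]
        by (intro ennreal_leI) (simp add: algebra_simps)
      finally show ?thesis .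
    qed
  qed
qed

end

theorem lemma4p1:
  fixes \<Gamma> :: "'a::euclidean_space set"
    and n V :: "'a \<Rightarrow> 'a"
    and T :: "real \<Rightarrow> 'a \<Rightarrow> 'a"
  assumes dim: "DIM('a) \<ge> 2"
    and hyp: "C3_closed_hypersurface \<Gamma>"
    and normal: "unit_normal_field \<Gamma> n"
    and V_C2: "Ck_on 2 UNIV V"
    and V_supp: "bounded {x. V x \<noteq> 0}"
    and flow0: "\<And>X. T 0 X = X"
    and flow: "\<And>X t. ((\<lambda>s. T s X) has_vector_derivative V (T t X)) (at t)"
    and tangent: "\<And>p. p \<in> \<Gamma> \<Longrightarrow> V p \<bullet> n p = 0"
  shows "\<exists>t0>0. \<exists>C>0.
           (\<forall>X\<in>\<Gamma>. \<forall>t. \<bar>t\<bar> \<le> t0 \<longrightarrow> infdist (T t X) \<Gamma> \<le> C * t\<^sup>2) \<and>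
           (\<forall>t. \<bar>t\<bar> \<le> t0 \<longrightarrow>
              emeasure lebesgue {x. indicator (T t ` inside \<Gamma>) x \<noteq> (indicator (inside \<Gamma>) x :: real)}
                \<le> ennreal (C * t\<^sup>2)) \<and>
           (\<forall>t. \<bar>t\<bar> \<le> t0 \<longrightarrow>
              emeasure lebesgue {x. indicator (T t ` outside \<Gamma>) x \<noteq> (indicator (outside \<Gamma>) x :: real)}
                \<le> ennreal (C * t\<^sup>2))"
proof -
  have V: "Ck_on (Suc 1) UNIV V" using V_C2 by (simp add: numeral_2_eq_2)
  obtain LV where LV: "LV-lipschitz_on UNIV V"
    by (rule Ck_on_Suc_compact_support_lipschitz[OF V V_supp])
  obtain M where M: "0 < M" "\<And>x. norm (V x) \<le> M"
    using compact_support_bounded[OF Ck_on_imp_continuous_on[OF V] V_supp] by blast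
  have "compact \<Gamma>" using hyp by (simp add: C3_closed_hypersurface_def)
  then obtain P \<phi> e r \<rho> c L where "tangential_chart_cover \<Gamma> V P \<phi> e r \<rho> c L"
    by (rule tangential_chart_cover_exists[OF _
          C3_closed_hypersurface_tangential_chart[OF hyp normal tangent V]])
  then interpret tangential_chart_flow \<Gamma> V P \<phi> e r \<rho> c L T M
    using M flow0 flow by (intro tangential_chart_flow.intro tangential_chart_flow_axioms.intro)
  obtain \<tau> K where \<tau>K: "0 < \<tau>" "0 < K"
    "\<And>X t. X \<in> \<Gamma> \<Longrightarrow> \<bar>t\<bar> \<le> \<tau> \<Longrightarrow> infdist (T t X) \<Gamma> \<le> K * t\<^sup>2"
    "\<And>\<Omega> t. frontier \<Omega> \<subseteq> \<Gamma> \<Longrightarrow> \<bar>t\<bar> \<le> \<tau> \<Longrightarrow>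
      emeasure lebesgue {x. indicator (T t ` \<Omega>) x \<noteq> (indicator \<Omega> x :: real)} \<le> ennreal (K * t\<^sup>2)"
    using quadratic_estimates[OF flow_add[OF LV flow0 flow]] by blast
  have "closed \<Gamma>" using \<open>compact \<Gamma>\<close> by (rule compact_imp_closed)
  with \<tau>K(1-3) \<tau>K(4)[OF frontier_inside_subset] \<tau>K(4)[OF frontier_outside_subset]
  show ?thesis by blast
qed

end
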